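(* Let $n$ be a positive integer, let $X$ be a random variable uniformly distributed in the unit ball $\mathbf{B}^n=\{x\in\mathbf{R}^n:\|x\|\le1\}$, and let $U$ be a unit vector chosen uniformly at random on the unit sphere of $\mathbf{R}^n$, independently of $X$. Consider the straight line unit-speed path $t\mapsto X+tU$, $t\ge0$, and its escape time $T=\inf\{t\ge0: X+tU\notin\operatorname{int}(\mathbf{B}^n)\}$. Then \[ \mathbb{E}[T]=\frac{2}{\sqrt{\pi}}\,\frac{\Gamma\bigl(\frac{n+2}{2}\bigr)}{\Gamma\bigl(\frac{n+3}{2}\bigr)}. \]
   Context: $\|\cdot\|$ is the Euclidean norm and $\Gamma$ is the Euler gamma function. Equivalently, $\mathbb{E}[T]$ is the expected straight-line distance from a uniformly random point of the unit ball to its boundary in a uniformly random direction. *)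

theory Defs
  imports "HOL-Probability.Probability"
begin

definition uniform_ball :: "'a::euclidean_space measure" where
  "uniform_ball = uniform_measure lborel (cball 0 1)"

text \<open>Uniform (normalised surface) distribution on the unit sphere, defined in the standard
  way as the cone measure: the image of the uniform distribution on the ball under radial
  projection y \<mapsto> y / |y| (the origin is a null set).\<close>
definition uniform_sphere :: "'a::euclidean_space measure" where
  "uniform_sphere = distr uniform_ball borel (\<lambda>y. y /\<^sub>R norm y)"

definition escape_time :: "'a::euclidean_space \<Rightarrow> 'a \<Rightarrow> real" where
  "escape_time x u = Inf {t. t \<ge> 0 \<and> x + t *\<^sub>R u \<notin> ball 0 1}"

end

(*
  By independence, E[T] is the average over u of the mean of escape_time x u over the ball. That
  mean does not depend on the unit vector u, because orthogonal transformations preserve Lebesgue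
  measure and commute with the escape time, so u may be taken to be a basis vector e. Writing
  x = x' + y e, the escape time is sqrt (1 - |x'|^2) - y on the chord through x', and its integral
  over y is 2 (1 - |x'|^2). By Fubini with two-dimensional discs as fibres, pi (1 - |x'|^2)
  integrates over the (n - 1)-ball to the volume V (n + 1) of the (n + 1)-ball. Hence
  E[T] = 2 V (n + 1) / (pi V n), which is the stated quotient of Gamma values.
*)
theory Submission
  imports Defs
begin

definition reflect_along :: "'a::real_inner \<Rightarrow> 'a \<Rightarrow> 'a" where
  "reflect_along v x = x - (2 * (x \<bullet> v) / (v \<bullet> v)) *\<^sub>R v"

lemma linear_reflect_along: "linear (reflect_along v)"
  unfolding reflect_along_def
  by (intro linearI) (auto simp: algebra_simps add_divide_distrib)

lemma inner_reflect_along_self: "reflect_along v x \<bullet> reflect_along v x = x \<bullet> x"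
proof (cases "v = 0")
  case False
  then show ?thesis
    by (simp add: reflect_along_def inner_diff_left inner_diff_right inner_commute[of v x]
        power2_eq_square field_simps)
qed (simp add: reflect_along_def)

lemma orthogonal_transformation_reflect_along: "orthogonal_transformation (reflect_along v)"
  by (simp add: orthogonal_transformation linear_reflect_along norm_eq_sqrt_inner inner_reflect_along_self)

lemma reflect_along_diff:
  assumes "norm a = norm b"
  shows "reflect_along (a - b) a = b"
proof (cases "a = b")
  case False
  have "a \<bullet> a = b \<bullet> b"
    using assms by (metis norm_eq)
  then have "2 * (a \<bullet> (a - b)) = (a - b) \<bullet> (a - b)"
    by (simp add: inner_diff_left inner_diff_right inner_commute)
  then show ?thesis
    using False by (simp add: reflect_along_def)
qed (simp add: reflect_along_def)

lemma orthogonal_transformation_exists_real_inner: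
  fixes a b :: "'a::real_inner"
  assumes "norm a = norm b"
  obtains f where "orthogonal_transformation f" "f a = b"
  using orthogonal_transformation_reflect_along reflect_along_diff[OF assms] by blast

lemma borel_measurable_orthogonal_transformation:
  fixes f :: "'a::euclidean_space \<Rightarrow> 'a"
  shows "orthogonal_transformation f \<Longrightarrow> f \<in> borel_measurable borel"
  by (intro borel_measurable_continuous_onI linear_continuous_on)
    (simp add: linear_linear orthogonal_transformation_linear)

lemma orthogonal_transformation_image_borel:
  fixes f :: "'a::euclidean_space \<Rightarrow> 'a"
  assumes f: "orthogonal_transformation f" and A: "A \<in> sets borel"
  shows "f ` A \<in> sets borel"
proof -
  have "inv f \<in> borel_measurable borel"
    using f by (intro borel_measurable_orthogonal_transformation orthogonal_transformation_inv)
  moreover have "f ` A = inv f -` A"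
    using f by (simp add: bij_vimage_eq_inv_image bij_imp_bij_inv inv_inv_eq orthogonal_transformation_bij)
  ultimately show ?thesis
    using measurable_sets[of "inv f" borel borel A] A by simp
qed

lemma negligible_orthogonal_transformation_image:
  fixes f :: "'a::euclidean_space \<Rightarrow> 'a"
  assumes f: "orthogonal_transformation f" and N: "negligible N"
  shows "negligible (f ` N)"
proof (rule negligible_locally_Lipschitz_image[OF _ N])
  fix x assume "x \<in> N"
  have "norm (f y - f x) \<le> 1 * norm (y - x)" for y
    using f by (simp add: orthogonal_transformation_isometry dist_norm)
  then show "\<exists>T B. open T \<and> x \<in> T \<and> (\<forall>y\<in>N \<inter> T. norm (f y - f x) \<le> B * norm (y - x))"
    by blast
qed simp

text \<open>By Vitali's covering theorem an open set is, up to a null set, a countable disjoint union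
  of balls, and an orthogonal transformation maps balls to balls of the same radius.\<close>
lemma emeasure_lborel_orthogonal_image_open:
  fixes f :: "'a::euclidean_space \<Rightarrow> 'a"
  assumes f: "orthogonal_transformation f" and S: "open S"
  shows "emeasure lborel (f ` S) = emeasure lborel S"
proof -
  let ?ball = "\<lambda>i. ball (fst i) (snd i)"
  obtain C where C: "countable C" "C \<subseteq> {i. 0 < snd i \<and> ?ball i \<subseteq> S}"
    and disj: "pairwise (\<lambda>i j. disjnt (?ball i) (?ball j)) C"
    and neg: "negligible (S - (\<Union>i\<in>C. ?ball i))"
  proof (rule Vitali_covering_theorem_balls[of S _ fst snd])
    fix x d assume "x \<in> S" "0 < (d::real)"
    then obtain e where "e > 0" "ball x e \<subseteq> S"
      using S open_contains_ball by blast
    with \<open>0 < d\<close> show "\<exists>i. i \<in> {i. 0 < snd i \<and> ?ball i \<subseteq> S} \<and> x \<in> ?ball i \<and> snd i < d"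
      by (intro exI[of _ "(x, min e d / 2)"]) auto
  qed blast
  define V where "V = (\<Union>i\<in>C. ?ball i)"
  define N where "N = S - V"
  have V: "V \<in> sets borel"
    unfolding V_def by (intro borel_open open_UN) auto
  have N: "N \<in> null_sets lborel" "f ` N \<in> null_sets lborel"
    using neg negligible_orthogonal_transformation_image[OF f neg] S V
      orthogonal_transformation_image_borel[OF f, of N]
    by (auto simp: N_def V_def negligible_iff_null_sets null_sets_completion_iff)
  have S_eq: "S = V \<union> N"
    using C by (auto simp: N_def V_def)
  have disj_family: "disjoint_family_on ?ball C"
    using disj by (auto simp: disjoint_family_on_def pairwise_def disjnt_def)
  moreover have "disjoint_family_on (\<lambda>i. f ` ?ball i) C"
    using disj_family orthogonal_transformation_inj[OF f]
    by (auto simp: disjoint_family_on_def image_Int[symmetric])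
  ultimately have "emeasure lborel (f ` V) = emeasure lborel V"
    using C image_orthogonal_transformation_ball[OF f]
    by (simp add: V_def image_UN emeasure_UN_countable)
       (intro nn_integral_cong, auto simp: emeasure_ball less_imp_le)
  then show ?thesis
    using S_eq N V orthogonal_transformation_image_borel[OF f V]
    by (simp add: image_Un emeasure_Un_null_set)
qed

lemma distr_lborel_orthogonal_transformation:
  fixes f :: "'a::euclidean_space \<Rightarrow> 'a"
  assumes f: "orthogonal_transformation f"
  shows "distr lborel borel f = lborel"
proof (rule lborel_eqI[symmetric])
  have meas: "f \<in> borel_measurable borel"
    using f by (rule borel_measurable_orthogonal_transformation)
  fix l u :: 'a assume "\<And>b. b \<in> Basis \<Longrightarrow> l \<bullet> b \<le> u \<bullet> b"
  moreover have "f -` box l u = inv f ` box l u"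
    using f by (simp add: bij_vimage_eq_inv_image orthogonal_transformation_bij)
  ultimately show "emeasure (distr lborel borel f) (box l u) = (\<Prod>b\<in>Basis. (u - l) \<bullet> b)"
    using meas emeasure_lborel_orthogonal_image_open[OF orthogonal_transformation_inv[OF f] open_box]
    by (simp add: emeasure_distr)
qed simp

lemma quadratic_nonneg_iff_ge_root:
  fixes a b c t :: real
  assumes a: "a > 0" and c: "c > 0" and t: "t \<ge> 0"
  shows "0 \<le> a * t\<^sup>2 + 2 * b * t - c \<longleftrightarrow> (sqrt (b\<^sup>2 + a * c) - b) / a \<le> t"
proof -
  define s where "s = sqrt (b\<^sup>2 + a * c)"
  have D: "b\<^sup>2 < b\<^sup>2 + a * c"
    using a c by simp
  then have s2: "s\<^sup>2 = b\<^sup>2 + a * c"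
    unfolding s_def using zero_le_power2[of b] by simp
  have "\<bar>b\<bar> < s"
    unfolding s_def using real_sqrt_less_mono[OF D] by simp
  then have pos: "a * t + b + s > 0"
    using a t by (smt (verit) mult_nonneg_nonneg)
  have "0 \<le> a * t\<^sup>2 + 2 * b * t - c \<longleftrightarrow> 0 \<le> a * (a * t\<^sup>2 + 2 * b * t - c)"
    using a by (simp add: zero_le_mult_iff)
  also have "a * (a * t\<^sup>2 + 2 * b * t - c) = (a * t + b - s) * (a * t + b + s)"
    using s2 by (simp add: algebra_simps power2_eq_square)
  also have "0 \<le> \<dots> \<longleftrightarrow> 0 \<le> a * t + b - s"
    using pos by (simp add: zero_le_mult_iff)
  also have "\<dots> \<longleftrightarrow> (s - b) / a \<le> t"
    using a by (simp add: field_simps)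
  finally show ?thesis
    by (simp add: s_def)
qed

lemma escape_time_outside: "1 \<le> norm x \<Longrightarrow> escape_time x u = 0"
  unfolding escape_time_def by (rule cInf_eq_minimum) auto

lemma escape_time_inside:
  assumes x: "norm x < 1" and u: "u \<noteq> 0"
  shows "escape_time x u = (sqrt ((x \<bullet> u)\<^sup>2 + (u \<bullet> u) * (1 - x \<bullet> x)) - x \<bullet> u) / (u \<bullet> u)"
    (is "_ = ?root")
proof -
  have a: "u \<bullet> u > 0" and c: "1 - x \<bullet> x > 0"
    using u x by (simp_all add: norm_eq_sqrt_inner)
  note root = quadratic_nonneg_iff_ge_root[OF a c, of _ "x \<bullet> u"]
  have "norm (x + t *\<^sub>R u) \<ge> 1 \<longleftrightarrow> 0 \<le> (u \<bullet> u) * t\<^sup>2 + 2 * (x \<bullet> u) * t - (1 - x \<bullet> x)" for t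
    by (simp add: norm_eq_sqrt_inner inner_commute power2_eq_square algebra_simps)
  then have "{t. t \<ge> 0 \<and> x + t *\<^sub>R u \<notin> ball 0 1} = {t. t \<ge> 0 \<and> ?root \<le> t}"
    using root by (auto simp: not_less)
  also have "\<dots> = {?root..}"
    using root[OF order_refl] c by auto
  finally show ?thesis
    by (simp add: escape_time_def)
qed

lemma escape_time_unit:
  assumes "norm u = 1"
  shows "escape_time x u = (if norm x < 1 then sqrt ((x \<bullet> u)\<^sup>2 + 1 - x \<bullet> x) - x \<bullet> u else 0)"
proof -
  have "u \<noteq> 0" "u \<bullet> u = 1"
    using assms by (auto simp: norm_eq_1)
  then show ?thesis
    by (simp add: escape_time_inside escape_time_outside algebra_simps)
qed

lemma escape_time_nonneg:
  assumes "u \<noteq> 0"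
  shows "0 \<le> escape_time x u"
proof (cases "norm x < 1")
  case True
  then have "x \<bullet> u \<le> sqrt ((x \<bullet> u)\<^sup>2 + (u \<bullet> u) * (1 - x \<bullet> x))"
    by (intro real_le_rsqrt) (simp add: norm_eq_sqrt_inner power2_eq_square)
  with True assms show ?thesis
    by (simp add: escape_time_inside)
qed (simp add: escape_time_outside)

lemma escape_time_eq:
  "escape_time x u = (if norm x < 1 then if u = 0 then Inf {}
     else (sqrt ((x \<bullet> u)\<^sup>2 + (u \<bullet> u) * (1 - x \<bullet> x)) - x \<bullet> u) / (u \<bullet> u) else 0)"
  by (simp add: escape_time_inside escape_time_outside) (simp add: escape_time_def)

lemma borel_measurable_escape_time [measurable]:
  assumes [measurable]: "f \<in> borel_measurable M" "g \<in> borel_measurable M"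
  shows "(\<lambda>\<omega>. escape_time (f \<omega>) (g \<omega>)) \<in> borel_measurable M"
  unfolding escape_time_eq by measurable

lemma escape_time_orthogonal_transformation:
  assumes "orthogonal_transformation f"
  shows "escape_time (f x) (f u) = escape_time x u"
proof -
  have "f x + t *\<^sub>R f u = f (x + t *\<^sub>R u)" for t
    using assms by (simp add: linear_add linear_scale orthogonal_transformation_linear)
  then show ?thesis
    using assms by (simp add: escape_time_def orthogonal_transformation_norm)
qed

lemma nn_integral_chord_exit_distance:
  fixes r :: real
  shows "(\<integral>\<^sup>+y. ennreal (if r + y\<^sup>2 < 1 then sqrt (1 - r) - y else 0) \<partial>lborel)
       = ennreal (2 * max 0 (1 - r))"
proof (cases "r < 1")
  case True
  define h where "h = sqrt (1 - r)"
  have h: "h > 0" "h\<^sup>2 = 1 - r"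
    using True by (simp_all add: h_def)
  have chord: "r + y\<^sup>2 < 1 \<longleftrightarrow> y \<in> {-h<..<h}" for y
  proof -
    have "r + y\<^sup>2 < 1 \<longleftrightarrow> \<not> h\<^sup>2 \<le> y\<^sup>2"
      using h by linarith
    also have "\<dots> \<longleftrightarrow> \<bar>y\<bar> < h"
      using abs_le_square_iff[of h y] h by auto
    finally show ?thesis
      by auto
  qed
  have "AE y in lborel. ennreal (if r + y\<^sup>2 < 1 then sqrt (1 - r) - y else 0)
          = ennreal (h - y) * indicator {-h..h} y"
    using AE_lborel_singleton[of h] AE_lborel_singleton[of "-h"]
    by eventually_elim (auto simp: chord h_def[symmetric] indicator_def)
  then have "(\<integral>\<^sup>+y. ennreal (if r + y\<^sup>2 < 1 then sqrt (1 - r) - y else 0) \<partial>lborel)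
      = (\<integral>\<^sup>+y. ennreal (h - y) * indicator {-h..h} y \<partial>lborel)"
    by (rule nn_integral_cong_AE)
  also have "\<dots> = ennreal (2 * h\<^sup>2)"
  proof (rule nn_integral_has_integral_lebesgue')
    have "((\<lambda>y. h - y) has_integral ((h * h - h\<^sup>2 / 2) - (h * (-h) - (-h)\<^sup>2 / 2))) {-h..h}"
      using h by (intro fundamental_theorem_of_calculus)
        (auto intro!: derivative_eq_intros simp: has_real_derivative_iff_has_vector_derivative[symmetric])
    then show "((\<lambda>y. h - y) has_integral 2 * h\<^sup>2) {-h..h}"
      by (simp add: power2_eq_square algebra_simps)
  qed simp
  finally show ?thesis
    using h True by simp
next
  case False
  then have "\<not> r + y\<^sup>2 < 1" for y
    by (smt (verit) zero_le_power2)
  with False show ?thesis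
    by simp
qed

lemma emeasure_PiM_lborel_cball:
  assumes J: "finite J" "J \<noteq> {}"
  shows "emeasure (Pi\<^sub>M J (\<lambda>_. lborel))
      ({g. sqrt (\<Sum>i\<in>J. (g i)\<^sup>2) \<le> s} \<inter> space (Pi\<^sub>M J (\<lambda>_. lborel)))
    = ennreal (unit_ball_vol (card J) * max 0 s ^ card J)"
proof (cases "s > 0")
  case False
  interpret product_sigma_finite "\<lambda>_::'i. lborel::real measure"
    by standard
  have "g i = 0" if "sqrt (\<Sum>i\<in>J. (g i)\<^sup>2) \<le> s" "i \<in> J" for g i
  proof -
    have "(\<Sum>i\<in>J. (g i)\<^sup>2) = 0"
      using that(1) False by (smt (verit) real_sqrt_ge_zero real_sqrt_eq_zero_cancel_iff sum_nonneg zero_le_power2)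
    then show ?thesis
      using that(2) J(1) by (simp add: sum_nonneg_eq_0_iff)
  qed
  then have sub: "{g. sqrt (\<Sum>i\<in>J. (g i)\<^sup>2) \<le> s} \<inter> space (Pi\<^sub>M J (\<lambda>_. lborel))
      \<subseteq> Pi\<^sub>E J (\<lambda>_. {0})"
    by (intro subsetI PiE_I) (auto simp: space_PiM PiE_def extensional_def)
  have "Pi\<^sub>E J (\<lambda>_. {0::real}) \<in> sets (Pi\<^sub>M J (\<lambda>_. lborel))"
    using J by (intro sets_PiM_I_finite) auto
  moreover have "emeasure (Pi\<^sub>M J (\<lambda>_. lborel)) (Pi\<^sub>E J (\<lambda>_. {0::real})) = 0"
    using J by (subst emeasure_PiM) auto
  ultimately show ?thesis
    using emeasure_eq_0[OF _ _ sub] False J by (simp add: max_def card_gt_0_iff)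
qed (use assms emeasure_cball_aux in simp)

text \<open>The fibres of the (|A| + 2)-ball over the A-coordinates f are discs of radius
  sqrt (1 - |f|^2).\<close>
lemma unit_ball_vol_add_two_eq_nn_integral:
  fixes A J :: "'i set"
  assumes A: "finite A" and J: "finite J" "card J = 2" and disj: "A \<inter> J = {}"
  shows "ennreal (unit_ball_vol (real (card A + 2)))
     = (\<integral>\<^sup>+f. ennreal (pi * max 0 (1 - (\<Sum>i\<in>A. (f i)\<^sup>2))) \<partial>Pi\<^sub>M A (\<lambda>_. lborel))"
proof -
  interpret product_sigma_finite "\<lambda>_::'i. lborel::real measure"
    by standard
  have "J \<noteq> {}"
    using J by auto
  define B where "B = {f. sqrt (\<Sum>i\<in>A \<union> J. (f i)\<^sup>2) \<le> 1} \<inter> space (Pi\<^sub>M (A \<union> J) (\<lambda>_. lborel))"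
  have B: "B \<in> sets (Pi\<^sub>M (A \<union> J) (\<lambda>_. lborel))"
    unfolding B_def using A J by measurable
  have "ennreal (unit_ball_vol (real (card A + 2))) = emeasure (Pi\<^sub>M (A \<union> J) (\<lambda>_. lborel)) B"
    unfolding B_def using emeasure_cball_aux[of "A \<union> J" 1] A J disj by (simp add: card_Un_disjoint)
  also have "\<dots> = (\<integral>\<^sup>+f. (\<integral>\<^sup>+g. indicator B (merge A J (f, g)) \<partial>Pi\<^sub>M J (\<lambda>_. lborel))
      \<partial>Pi\<^sub>M A (\<lambda>_. lborel))"
    using B A J disj by (simp add: product_nn_integral_fold flip: nn_integral_indicator)
  also have "\<dots> = (\<integral>\<^sup>+f. ennreal (pi * max 0 (1 - (\<Sum>i\<in>A. (f i)\<^sup>2))) \<partial>Pi\<^sub>M A (\<lambda>_. lborel))"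
  proof (intro nn_integral_cong)
    fix f :: "'i \<Rightarrow> real" assume f: "f \<in> space (Pi\<^sub>M A (\<lambda>_. lborel))"
    define r where "r = (\<Sum>i\<in>A. (f i)\<^sup>2)"
    define D where "D = {g. sqrt (\<Sum>i\<in>J. (g i)\<^sup>2) \<le> sqrt (1 - r)} \<inter> space (Pi\<^sub>M J (\<lambda>_. lborel))"
    have "indicator B (merge A J (f, g)) = (indicator D g :: ennreal)"
      if g: "g \<in> space (Pi\<^sub>M J (\<lambda>_. lborel))" for g
    proof -
      have "(\<Sum>i\<in>A \<union> J. (merge A J (f, g) i)\<^sup>2) = r + (\<Sum>i\<in>J. (g i)\<^sup>2)"
        unfolding r_def using A J disj
        by (subst sum.union_disjoint) (auto intro!: sum.cong simp: merge_def)
      moreover have "0 \<le> (\<Sum>i\<in>J. (g i)\<^sup>2)" "0 \<le> r"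
        by (simp_all add: r_def sum_nonneg)
      ultimately show ?thesis
        using f g by (auto simp: B_def D_def indicator_def space_PiM PiE_def)
    qed
    then have "(\<integral>\<^sup>+g. indicator B (merge A J (f, g)) \<partial>Pi\<^sub>M J (\<lambda>_. lborel))
        = emeasure (Pi\<^sub>M J (\<lambda>_. lborel)) D"
      using J by (simp cong: nn_integral_cong flip: nn_integral_indicator) (simp add: D_def)
    also have "\<dots> = ennreal (unit_ball_vol 2 * max 0 (sqrt (1 - r)) ^ 2)"
      unfolding D_def emeasure_PiM_lborel_cball[OF J(1) \<open>J \<noteq> {}\<close>] J(2) by simp
    also have "\<dots> = ennreal (pi * max 0 (1 - r))"
      by (cases "r \<le> 1") (simp_all add: eval_unit_ball_vol max_def)
    finally show "(\<integral>\<^sup>+g. indicator B (merge A J (f, g)) \<partial>Pi\<^sub>M J (\<lambda>_. lborel))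
        = ennreal (pi * max 0 (1 - (\<Sum>i\<in>A. (f i)\<^sup>2)))"
      by (simp add: r_def)
  qed
  finally show ?thesis .
qed

lemma nn_integral_escape_time_Basis:
  fixes e :: "'a::euclidean_space"
  assumes e: "e \<in> Basis"
  shows "(\<integral>\<^sup>+x. ennreal (escape_time x e) \<partial>lborel)
    = ennreal (2 * unit_ball_vol (real DIM('a) + 1) / pi)"
proof -
  interpret product_sigma_finite "\<lambda>_::'a. lborel::real measure"
    by standard
  define A where "A = Basis - {e}"
  have A: "finite A" "e \<notin> A" "Basis = insert e A"
    using e by (auto simp: A_def)
  define r where "r f = (\<Sum>b\<in>A. (f b)\<^sup>2)" for f :: "'a \<Rightarrow> real"
  have slice: "escape_time (\<Sum>b\<in>Basis. (f(e := y)) b *\<^sub>R b) e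
      = (if r f + y\<^sup>2 < 1 then sqrt (1 - r f) - y else 0)" for f y
  proof -
    define x where "x = (\<Sum>b\<in>Basis. (f(e := y)) b *\<^sub>R b)"
    have coord: "x \<bullet> b = (f(e := y)) b" if "b \<in> Basis" for b
      using that by (simp add: x_def)
    have "x \<bullet> x = (\<Sum>b\<in>insert e A. ((f(e := y)) b)\<^sup>2)"
      using A(3) coord by (simp add: euclidean_inner[of x x] power2_eq_square)
    also have "\<dots> = y\<^sup>2 + r f"
      using A(1,2) by (auto simp: r_def intro!: sum.cong)
    finally have "x \<bullet> x = y\<^sup>2 + r f" .
    moreover have "x \<bullet> e = y"
      using coord e by simp
    ultimately have "escape_time x e = (if r f + y\<^sup>2 < 1 then sqrt (1 - r f) - y else 0)"
      using e by (simp add: escape_time_unit norm_eq_sqrt_inner add.commute)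
    then show ?thesis
      by (simp add: x_def)
  qed
  have "(\<integral>\<^sup>+x. ennreal (escape_time x e) \<partial>lborel)
      = (\<integral>\<^sup>+f. ennreal (escape_time (\<Sum>b\<in>Basis. f b *\<^sub>R b) e) \<partial>Pi\<^sub>M (insert e A) (\<lambda>_. lborel))"
    by (subst lborel_eq) (simp add: nn_integral_distr A(3)[symmetric])
  also have "\<dots> = (\<integral>\<^sup>+f. (\<integral>\<^sup>+y. ennreal (escape_time (\<Sum>b\<in>Basis. (f(e := y)) b *\<^sub>R b) e) \<partial>lborel)
      \<partial>Pi\<^sub>M A (\<lambda>_. lborel))"
    using A by (intro product_nn_integral_insert) measurable
  also have "\<dots> = (\<integral>\<^sup>+f. ennreal (2 / pi) * ennreal (pi * max 0 (1 - r f)) \<partial>Pi\<^sub>M A (\<lambda>_. lborel))"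
    unfolding slice nn_integral_chord_exit_distance by (simp flip: ennreal_mult)
  \<comment> \<open>Any two indices outside A serve as the two extra coordinates; e and 0 do.\<close>
  also have "\<dots> = ennreal (2 / pi) * ennreal (unit_ball_vol (real (card A + 2)))"
    using unit_ball_vol_add_two_eq_nn_integral[OF A(1), of "{e, 0}"] e
    by (simp add: r_def nn_integral_cmult A_def nonzero_Basis)
  also have "real (card A + 2) = real DIM('a) + 1"
    by (simp add: A)
  finally show ?thesis
    by (simp flip: ennreal_mult)
qed

lemma nn_integral_lborel_escape_time:
  fixes u :: "'a::euclidean_space"
  assumes u: "norm u = 1"
  shows "(\<integral>\<^sup>+x. ennreal (escape_time x u) \<partial>lborel)
    = ennreal (2 * unit_ball_vol (real DIM('a) + 1) / pi)"
proof -
  obtain e :: 'a where e: "e \<in> Basis"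
    using nonempty_Basis by blast
  then obtain f where f: "orthogonal_transformation f" "f e = u"
    using orthogonal_transformation_exists_real_inner[of e u] u by auto
  have [measurable]: "f \<in> borel_measurable borel"
    using f(1) by (rule borel_measurable_orthogonal_transformation)
  have "(\<integral>\<^sup>+x. ennreal (escape_time x u) \<partial>lborel)
      = (\<integral>\<^sup>+x. ennreal (escape_time x u) \<partial>distr lborel borel f)"
    using f(1) by (simp add: distr_lborel_orthogonal_transformation)
  also have "\<dots> = (\<integral>\<^sup>+x. ennreal (escape_time (f x) (f e)) \<partial>lborel)"
    using f(2) by (simp add: nn_integral_distr)
  also have "\<dots> = (\<integral>\<^sup>+x. ennreal (escape_time x e) \<partial>lborel)"
    using f(1) by (simp add: escape_time_orthogonal_transformation)
  finally show ?thesis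
    using nn_integral_escape_time_Basis[OF e] by simp
qed

lemma prob_space_uniform_ball: "prob_space (uniform_ball :: 'a::euclidean_space measure)"
proof -
  have vol: "unit_ball_vol DIM('a) \<noteq> 0"
    using unit_ball_vol_pos[of "DIM('a)"] by linarith
  show ?thesis
    unfolding uniform_ball_def
    by (intro prob_space_uniform_measure) (simp_all add: emeasure_cball vol)
qed

lemma sets_uniform_ball [simp, measurable_cong]:
  "sets (uniform_ball :: 'a::euclidean_space measure) = sets borel"
  by (simp add: uniform_ball_def)

lemma prob_space_uniform_sphere: "prob_space (uniform_sphere :: 'a::euclidean_space measure)"
  unfolding uniform_sphere_def
  by (intro prob_space.prob_space_distr prob_space_uniform_ball) simp

lemma AE_uniform_sphere_norm: "AE u in (uniform_sphere :: 'a::euclidean_space measure). norm u = 1"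
proof -
  have "AE y in (uniform_ball :: 'a measure). y \<noteq> 0"
    unfolding uniform_ball_def
    by (intro AE_uniform_measureI) (auto intro: AE_mp[OF AE_lborel_singleton[of 0]])
  then show ?thesis
    unfolding uniform_sphere_def by (subst AE_distr_iff) auto
qed

lemma nn_integral_uniform_ball_escape_time:
  fixes u :: "'a::euclidean_space"
  assumes "norm u = 1"
  shows "(\<integral>\<^sup>+x. ennreal (escape_time x u) \<partial>uniform_ball)
    = ennreal (2 * unit_ball_vol (real DIM('a) + 1) / (pi * unit_ball_vol DIM('a)))"
proof -
  have "(\<integral>\<^sup>+x. ennreal (escape_time x u) * indicator (cball 0 1) x \<partial>lborel)
      = (\<integral>\<^sup>+x. ennreal (escape_time x u) \<partial>lborel)"
    by (intro nn_integral_cong) (auto simp: indicator_def escape_time_outside)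
  then show ?thesis
    using assms
    by (simp add: uniform_ball_def nn_integral_uniform_measure nn_integral_lborel_escape_time
        emeasure_cball divide_ennreal)
qed

lemma (in prob_space) nn_integral_indep_var:
  assumes indep: "indep_var S X T Y" and g [measurable]: "g \<in> borel_measurable (S \<Otimes>\<^sub>M T)"
  shows "(\<integral>\<^sup>+\<omega>. g (X \<omega>, Y \<omega>) \<partial>M)
    = (\<integral>\<^sup>+y. (\<integral>\<^sup>+x. g (x, y) \<partial>distr M S X) \<partial>distr M T Y)"
proof -
  have [measurable]: "X \<in> measurable M S" "Y \<in> measurable M T"
    using indep by (auto dest: indep_var_rv1 indep_var_rv2)
  interpret MX: prob_space "distr M S X"
    by (rule prob_space_distr) simp
  interpret MY: prob_space "distr M T Y"
    by (rule prob_space_distr) simp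
  interpret XY: pair_prob_space "distr M S X" "distr M T Y" ..
  have "(\<integral>\<^sup>+\<omega>. g (X \<omega>, Y \<omega>) \<partial>M)
      = (\<integral>\<^sup>+p. g p \<partial>distr M (S \<Otimes>\<^sub>M T) (\<lambda>\<omega>. (X \<omega>, Y \<omega>)))"
    by (simp add: nn_integral_distr)
  also have "\<dots> = (\<integral>\<^sup>+p. g p \<partial>(distr M S X \<Otimes>\<^sub>M distr M T Y))"
    using indep by (simp add: indep_var_distribution_eq)
  also have "\<dots> = (\<integral>\<^sup>+y. (\<integral>\<^sup>+x. g (x, y) \<partial>distr M S X) \<partial>distr M T Y)"
    by (intro XY.nn_integral_snd[symmetric]) simp
  finally show ?thesis .
qed

lemma unit_ball_vol_ratio_Gamma:
  fixes n :: real
  assumes "n \<ge> 0"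
  shows "2 * unit_ball_vol (n + 1) / (pi * unit_ball_vol n)
    = 2 / sqrt pi * Gamma ((n + 2) / 2) / Gamma ((n + 3) / 2)"
proof -
  have "pi powr ((n + 1) / 2) = pi powr (n / 2) * sqrt pi"
    by (simp add: powr_add[symmetric] powr_half_sqrt[symmetric] add_divide_distrib)
  moreover have "(n + 2) / 2 = n / 2 + 1" "(n + 3) / 2 = (n + 1) / 2 + 1"
    by simp_all
  moreover have "Gamma (n / 2 + 1) > 0" "Gamma ((n + 1) / 2 + 1) > 0"
    using assms by (intro Gamma_real_pos; simp add: add_nonneg_pos)+
  ultimately show ?thesis
    by (simp add: unit_ball_vol_def field_simps)
qed

theorem proposition5:
  fixes M :: "'s measure" and X U :: "'s \<Rightarrow> 'a::euclidean_space"
  assumes "prob_space M"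
    and "X \<in> borel_measurable M" and "U \<in> borel_measurable M"
    and "distr M borel X = uniform_ball"
    and "distr M borel U = uniform_sphere"
    and "prob_space.indep_var M borel X borel U"
  shows "integrable M (\<lambda>\<omega>. escape_time (X \<omega>) (U \<omega>))
    \<and> (\<integral>\<omega>. escape_time (X \<omega>) (U \<omega>) \<partial>M)
        = 2 / sqrt pi * Gamma ((real DIM('a) + 2) / 2) / Gamma ((real DIM('a) + 3) / 2)"
proof -
  interpret prob_space M by fact
  interpret S: prob_space "uniform_sphere :: 'a measure"
    by (rule prob_space_uniform_sphere)
  note [measurable] = assms(2,3)
  define E where "E = 2 * unit_ball_vol (real DIM('a) + 1) / (pi * unit_ball_vol DIM('a))"
  have "(\<integral>\<^sup>+\<omega>. ennreal (escape_time (X \<omega>) (U \<omega>)) \<partial>M)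
      = (\<integral>\<^sup>+u. (\<integral>\<^sup>+x. ennreal (escape_time x u) \<partial>uniform_ball) \<partial>(uniform_sphere :: 'a measure))"
    using nn_integral_indep_var[OF assms(6), of "\<lambda>(x, u). ennreal (escape_time x u)"] assms(4,5)
    by simp
  also have "\<dots> = (\<integral>\<^sup>+u. ennreal E \<partial>(uniform_sphere :: 'a measure))"
    by (intro nn_integral_cong_AE)
      (use AE_uniform_sphere_norm in \<open>auto simp: E_def nn_integral_uniform_ball_escape_time\<close>)
  finally have nn: "(\<integral>\<^sup>+\<omega>. ennreal (escape_time (X \<omega>) (U \<omega>)) \<partial>M) = ennreal E"
    by (simp add: S.emeasure_space_1)
  have "AE \<omega> in M. norm (U \<omega>) = 1"
    using AE_uniform_sphere_norm[where 'a='a] unfolding assms(5)[symmetric]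
    by (subst (asm) AE_distr_iff) auto
  then have "AE \<omega> in M. 0 \<le> escape_time (X \<omega>) (U \<omega>)"
    by eventually_elim (auto intro: escape_time_nonneg)
  then have "has_bochner_integral M (\<lambda>\<omega>. escape_time (X \<omega>) (U \<omega>)) E"
    using nn by (intro has_bochner_integral_nn_integral) (simp_all add: E_def)
  moreover have "E = 2 / sqrt pi * Gamma ((real DIM('a) + 2) / 2) / Gamma ((real DIM('a) + 3) / 2)"
    unfolding E_def by (rule unit_ball_vol_ratio_Gamma) simp
  ultimately show ?thesis
    by (simp add: has_bochner_integral_iff)
qed

end
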